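(* Let $\widehat D=(Q,\widehat\Sigma,q_0,\delta,F)$ be as in the context. For all $q,q'\in Q$ and $\sigma\in\Sigma$: if $\delta(q,\sigma^0)=q'$, then there exist $\mathit{act}\in\Sigma_{\mathsf{Act}}$ and $q_f\in Q$ with $\mathit{act}[0]=0$, $\delta(q,\mathit{act})=q_f$ and $\mathit{act}|_\sigma\in\{0,+1\}$; and if $\delta(q,\sigma^1)=q'$, then there exist $\mathit{act}\in\Sigma_{\mathsf{Act}}$ and $q_f\in Q$ with $\mathit{act}[0]=1$, $\delta(q,\mathit{act})=q_f$ and $\mathit{act}|_\sigma\in\{-1,0,+1\}$.
   Context: Let $\Sigma=\{\sigma_1,\dots,\sigma_k\}$ be a finite alphabet. A sample set is a pair of finite sets of words $\mathcal S^+,\mathcal S^-\subseteq\Sigma^*$ with $\mathcal S^+\cap\mathcal S^-=\emptyset$; write $\mathcal S=\mathcal S^+\cup\mathcal S^-$ and $\mathrm{pref}(\mathcal S)$ for the set of all prefixes (including $\varepsilon$ and the words themselves) of words of $\mathcal S$. We are given $\mathsf{ce}:\mathrm{pref}(\mathcal S)\to\mathbb N$ with $\mathsf{ce}(\varepsilon)=0$ and $\mathsf{ce}(w\sigma)-\mathsf{ce}(w)\in\{-1,0,+1\}$ whenever $w\sigma\in\mathrm{pref}(\mathcal S)$, $\sigma\in\Sigma$. For $d\in\mathbb N$, $\mathrm{sgn}(d)=0$ if $d=0$ and $1$ otherwise. For $w\in\mathrm{pref}(\mathcal S)$ define $\mathsf{Act}(w)\in\{0,1\}\times\{0,+1,-1,\bot\}^k$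 by $\mathsf{Act}(w)[0]=\mathrm{sgn}(\mathsf{ce}(w))$ and, for $i\in[1,k]$, $\mathsf{Act}(w)[i]=\mathsf{ce}(w\sigma_i)-\mathsf{ce}(w)$ if $w\sigma_i\in\mathrm{pref}(\mathcal S)$, and $\mathsf{Act}(w)[i]=\bot$ otherwise. For a tuple $\mathit{act}$ of this shape, $\mathit{act}|_{\sigma_i}$ denotes $\mathit{act}[i]$. Two such tuples $x,y$ are similar, $x\sim y$, if either $x[0]\neq y[0]$, or for all $i\in[1,k]$: $x[i]=\bot$ or $y[i]=\bot$ or $x[i]=y[i]$; otherwise $x\not\sim y$. Let $\widetilde\Sigma=\{\sigma^0,\sigma^1:\sigma\in\Sigma\}$ (fresh letters). For $w\in\mathrm{pref}(\mathcal S)$, $\mathsf{Enc}(\varepsilon)=\varepsilon$ and $\mathsf{Enc}(w)$ is the word over $\widetilde\Sigma$ of the same length with $\mathsf{Enc}(w)[0]=w[0]^0$ and $\mathsf{Enc}(w)[i]=w[i]^{\mathrm{sgn}(\mathsf{ce}(w[0\cdots i-1]))}$ for $i>0$ (positions indexed from $0$). Let $\Sigma_{\mathsf{Act}}=\{\mathsf{Act}(w):w\in\mathrm{pref}(\mathcal S)\}$, viewed as a set of fresh letters, and $\widehat\Sigma=\widetilde\Sigma\cup\Sigma_{\mathsf{Act}}$. The enriched sample over $\widehat\Sigma$ is: $\widehat{\mathcal S}^+=\{\mathsf{Enc}(w):w\in\mathcal S^+\}\cup\{\mathsf{Enc}(w)\cdot\mathsf{Act}(w):w\in\mathrm{pref}(\mathcal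 S)\}$ and $\widehat{\mathcal S}^-=\{\mathsf{Enc}(w):w\in\mathcal S^-\}\cup\{\mathsf{Enc}(w)\cdot\mathit{op}:w\in\mathrm{pref}(\mathcal S),\ \mathit{op}\in\Sigma_{\mathsf{Act}},\ \mathit{op}\not\sim\mathsf{Act}(w)\}$. $\widehat D=(Q,\widehat\Sigma,q_0,\delta,F)$ is a deterministic finite automaton with possibly partial transition function $\delta$ (a word is accepted iff its run exists and ends in $F$) such that: (i) $\widehat D$ accepts every word of $\widehat{\mathcal S}^+$ and rejects every word of $\widehat{\mathcal S}^-$; (ii) every transition comes from a prefix of a positive sample: whenever $\delta(q,x)=q'$ with $x\in\widehat\Sigma$, there is a word $u$ with $ux\in\mathrm{pref}(\widehat{\mathcal S}^+)$ and $\delta(q_0,u)=q$. (These properties hold e.g. for the output of the RPNI algorithm.) *)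

theory Defs
  imports Main
begin

text \<open>The alphabet \<Sigma> = {\<sigma>_1,...,\<sigma>_k} is given as a distinct list sigma (sigma ! (i-1) = \<sigma>_i).
  Letters of the enriched alphabet: Tl a b is a^b (b \<in> {0,1}); ActL act is an action tuple
  (act[0], [act[1],...,act[k]]) with None standing for \<bottom>.\<close>

datatype 'a hlet = Tl 'a nat | ActL "nat \<times> int option list"

definition sgnn :: "nat \<Rightarrow> nat" where
  "sgnn d = (if d = 0 then 0 else 1)"

definition prefs :: "'a list set \<Rightarrow> 'a list set" where
  "prefs S = {u. \<exists>w\<in>S. \<exists>v. u @ v = w}"

definition Act :: "'a list \<Rightarrow> 'a list set \<Rightarrow> ('a list \<Rightarrow> nat) \<Rightarrow> 'a list \<Rightarrow> nat \<times> int option list" where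
  "Act sigma S ce w =
     (sgnn (ce w),
      map (\<lambda>s. if w @ [s] \<in> prefs S then Some (int (ce (w @ [s])) - int (ce w)) else None) sigma)"

text \<open>act|_\<sigma>_i, for i < k (0-based index into sigma)\<close>
definition restr :: "nat \<times> int option list \<Rightarrow> nat \<Rightarrow> int option" where
  "restr act i = snd act ! i"

definition similar :: "nat \<Rightarrow> nat \<times> int option list \<Rightarrow> nat \<times> int option list \<Rightarrow> bool" where
  "similar k x y \<longleftrightarrow> fst x \<noteq> fst y \<or>
     (\<forall>i<k. restr x i = None \<or> restr y i = None \<or> restr x i = restr y i)"

definition Enc :: "('a list \<Rightarrow> nat) \<Rightarrow> 'a list \<Rightarrow> 'a hlet list" where
  "Enc ce w = map (\<lambda>i. Tl (w ! i) (if i = 0 then 0 else sgnn (ce (take i w)))) [0..<length w]"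

definition SigmaAct :: "'a list \<Rightarrow> 'a list set \<Rightarrow> ('a list \<Rightarrow> nat) \<Rightarrow> (nat \<times> int option list) set" where
  "SigmaAct sigma S ce = Act sigma S ce ` prefs S"

definition SigmaHat :: "'a list \<Rightarrow> 'a list set \<Rightarrow> ('a list \<Rightarrow> nat) \<Rightarrow> 'a hlet set" where
  "SigmaHat sigma S ce = {Tl s b | s b. s \<in> set sigma \<and> b \<in> {0, 1}} \<union> ActL ` SigmaAct sigma S ce"

definition SposHat :: "'a list \<Rightarrow> 'a list set \<Rightarrow> 'a list set \<Rightarrow> ('a list \<Rightarrow> nat) \<Rightarrow> 'a hlet list set" where
  "SposHat sigma Sp Sn ce =
     Enc ce ` Sp \<union> {Enc ce w @ [ActL (Act sigma (Sp \<union> Sn) ce w)] | w. w \<in> prefs (Sp \<union> Sn)}"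

definition SnegHat :: "'a list \<Rightarrow> 'a list set \<Rightarrow> 'a list set \<Rightarrow> ('a list \<Rightarrow> nat) \<Rightarrow> 'a hlet list set" where
  "SnegHat sigma Sp Sn ce =
     Enc ce ` Sn \<union> {Enc ce w @ [ActL op] | w op. w \<in> prefs (Sp \<union> Sn)
        \<and> op \<in> SigmaAct sigma (Sp \<union> Sn) ce
        \<and> \<not> similar (length sigma) op (Act sigma (Sp \<union> Sn) ce w)}"

fun run :: "('q \<Rightarrow> 'b \<Rightarrow> 'q option) \<Rightarrow> 'q \<Rightarrow> 'b list \<Rightarrow> 'q option" where
  "run delta q [] = Some q"
| "run delta q (x # xs) = (case delta q x of None \<Rightarrow> None | Some q' \<Rightarrow> run delta q' xs)"

definition accepts :: "('q \<Rightarrow> 'b \<Rightarrow> 'q option) \<Rightarrow> 'q \<Rightarrow> 'q set \<Rightarrow> 'b list \<Rightarrow> bool" where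
  "accepts delta q0 F w \<longleftrightarrow> (\<exists>q. run delta q0 w = Some q \<and> q \<in> F)"

end

theory Submission
  imports Defs
begin

text \<open>A transition on \<sigma>^b exists only because some positive sample has a prefix
  Enc(v) \<sigma>^b with v\<sigma> a sample prefix; hence q is the state reached on Enc(v) and b = sgn(ce v).
  As Enc(v) Act(v) is a positive sample, q has an Act(v)-transition, and Act(v) has first
  component sgn(ce v) = b and \<sigma>-component ce(v\<sigma>) - ce(v) \<in> {-1,0,1}, which is nonnegative when
  ce v = 0.\<close>

lemma length_Enc [simp]: "length (Enc ce w) = length w"
  by (simp add: Enc_def)

lemma take_Enc: "take n (Enc ce w) = Enc ce (take n w)"
  by (rule nth_equalityI) (auto simp: Enc_def)

lemma Enc_snoc:
  \<comment> \<open>ce [] = 0 makes the fixed superscript 0 of the first letter a case of sgn (ce v).\<close>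
  assumes "ce [] = 0"
  shows "Enc ce (v @ [s]) = Enc ce v @ [Tl s (sgnn (ce v))]"
  by (rule nth_equalityI) (auto simp: Enc_def nth_append assms sgnn_def)

lemma Enc_eq_snoc_Tl:
  assumes "ce [] = 0" and "Enc ce w = u @ [Tl s b]"
  shows "\<exists>v. w = v @ [s] \<and> u = Enc ce v \<and> b = sgnn (ce v)"
proof (cases w rule: rev_exhaust)
  case Nil
  then show ?thesis using assms(2) by (simp add: Enc_def)
next
  case (snoc v s')
  then show ?thesis using assms by (simp add: Enc_snoc)
qed

lemma prefix_of_Enc:
  assumes "u @ r = Enc ce w"
  shows "u = Enc ce (take (length u) w)"
proof -
  have "u = take (length u) (u @ r)" by simp
  then show ?thesis by (simp add: assms take_Enc)
qed

lemma mem_prefs_self: "w \<in> S \<Longrightarrow> w \<in> prefs S"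
  unfolding prefs_def by blast

lemma take_mem_prefs:
  assumes "w \<in> prefs S"
  shows "take n w \<in> prefs S"
proof -
  obtain v where "w @ v \<in> S" using assms unfolding prefs_def by blast
  then have "take n w @ (drop n w @ v) \<in> S"
    by (simp only: append_assoc[symmetric] append_take_drop_id)
  then show ?thesis unfolding prefs_def by blast
qed

lemma prefs_SposHat_subset:
  "prefs (SposHat sigma Sp Sn ce) \<subseteq> Enc ce ` prefs (Sp \<union> Sn)
     \<union> {Enc ce w @ [ActL (Act sigma (Sp \<union> Sn) ce w)] | w. w \<in> prefs (Sp \<union> Sn)}"
proof
  fix u assume "u \<in> prefs (SposHat sigma Sp Sn ce)"
  then obtain z r where z: "z \<in> SposHat sigma Sp Sn ce" and ur: "u @ r = z"
    unfolding prefs_def by blast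
  from z consider (sample) w where "w \<in> Sp" "z = Enc ce w"
    | (action) w where "w \<in> prefs (Sp \<union> Sn)" "z = Enc ce w @ [ActL (Act sigma (Sp \<union> Sn) ce w)]"
    unfolding SposHat_def by blast
  then show "u \<in> Enc ce ` prefs (Sp \<union> Sn)
     \<union> {Enc ce w @ [ActL (Act sigma (Sp \<union> Sn) ce w)] | w. w \<in> prefs (Sp \<union> Sn)}"
  proof cases
    case sample
    then have "u = Enc ce (take (length u) w)" using ur prefix_of_Enc by blast
    moreover have "take (length u) w \<in> prefs (Sp \<union> Sn)"
      using sample by (simp add: mem_prefs_self take_mem_prefs)
    ultimately show ?thesis by blast
  next
    case action
    show ?thesis
    proof (cases r rule: rev_exhaust)
      case Nil
      then show ?thesis using action ur by auto
    next
      case (snoc r' x)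
      then have "u @ r' = Enc ce w" using action ur by simp
      then have "u = Enc ce (take (length u) w)" by (rule prefix_of_Enc)
      then show ?thesis using action take_mem_prefs by blast
    qed
  qed
qed

lemma Tl_prefix_of_SposHat:
  assumes "ce [] = 0" and "u @ [Tl s b] \<in> prefs (SposHat sigma Sp Sn ce)"
  shows "\<exists>v. u = Enc ce v \<and> v @ [s] \<in> prefs (Sp \<union> Sn) \<and> b = sgnn (ce v)"
proof -
  have "u @ [Tl s b] \<in> Enc ce ` prefs (Sp \<union> Sn)"
    using assms(2) prefs_SposHat_subset[of sigma Sp Sn ce] by auto
  then obtain w where "w \<in> prefs (Sp \<union> Sn)" and "Enc ce w = u @ [Tl s b]" by auto
  then show ?thesis using Enc_eq_snoc_Tl[where ce = ce, OF assms(1)] by blast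
qed

lemma run_append: "run d q (xs @ ys) = (case run d q xs of None \<Rightarrow> None | Some q' \<Rightarrow> run d q' ys)"
  by (induction xs arbitrary: q) (auto split: option.splits)

lemma restr_Act:
  "i < length sigma \<Longrightarrow> w @ [sigma ! i] \<in> prefs S \<Longrightarrow>
     restr (Act sigma S ce w) i = Some (int (ce (w @ [sigma ! i])) - int (ce w))"
  by (simp add: restr_def Act_def)

theorem lemma2:
  fixes sigma :: "'a list" and Sp Sn :: "'a list set" and ce :: "'a list \<Rightarrow> nat"
    and Q :: "'q set" and q0 :: 'q and delta :: "'q \<Rightarrow> 'a hlet \<Rightarrow> 'q option" and F :: "'q set"
  assumes dist: "distinct sigma"
    and fin: "finite Sp" "finite Sn"
    and words: "\<forall>w \<in> Sp \<union> Sn. set w \<subseteq> set sigma"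
    and disj: "Sp \<inter> Sn = {}"
    and ce0: "ce [] = 0"
    and ce_step: "\<forall>w s. w @ [s] \<in> prefs (Sp \<union> Sn) \<longrightarrow>
                     int (ce (w @ [s])) - int (ce w) \<in> {-1, 0, 1}"
    and q0Q: "q0 \<in> Q" and FQ: "F \<subseteq> Q"
    and deltaQ: "\<forall>q x q'. q \<in> Q \<and> delta q x = Some q' \<longrightarrow> q' \<in> Q"
    and alph: "\<forall>q x. x \<notin> SigmaHat sigma (Sp \<union> Sn) ce \<longrightarrow> delta q x = None"
    and pos: "\<forall>w \<in> SposHat sigma Sp Sn ce. accepts delta q0 F w"
    and neg: "\<forall>w \<in> SnegHat sigma Sp Sn ce. \<not> accepts delta q0 F w"
    and from_pos: "\<forall>q x q'. q \<in> Q \<and> x \<in> SigmaHat sigma (Sp \<union> Sn) ce \<and> delta q x = Some q' \<longrightarrow>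
                     (\<exists>u. u @ [x] \<in> prefs (SposHat sigma Sp Sn ce) \<and> run delta q0 u = Some q)"
  shows "\<forall>q \<in> Q. \<forall>q' \<in> Q. \<forall>i < length sigma.
     (delta q (Tl (sigma ! i) 0) = Some q' \<longrightarrow>
        (\<exists>act \<in> SigmaAct sigma (Sp \<union> Sn) ce. \<exists>qf \<in> Q.
           fst act = 0 \<and> delta q (ActL act) = Some qf \<and> restr act i \<in> {Some 0, Some 1}))
   \<and> (delta q (Tl (sigma ! i) 1) = Some q' \<longrightarrow>
        (\<exists>act \<in> SigmaAct sigma (Sp \<union> Sn) ce. \<exists>qf \<in> Q.
           fst act = 1 \<and> delta q (ActL act) = Some qf \<and> restr act i \<in> {Some (-1), Some 0, Some 1}))"
proof -
  let ?S = "Sp \<union> Sn"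
  have key: "\<exists>act \<in> SigmaAct sigma ?S ce. \<exists>qf \<in> Q. fst act = b \<and> delta q (ActL act) = Some qf
               \<and> restr act i \<in> (if b = 0 then {Some 0, Some 1} else {Some (-1), Some 0, Some 1})"
    if q: "q \<in> Q" and i: "i < length sigma" and tr: "delta q (Tl (sigma ! i) b) = Some q'"
    for q q' i b
  proof -
    have "Tl (sigma ! i) b \<in> SigmaHat sigma ?S ce" using alph tr by (metis option.distinct(1))
    then obtain u where "u @ [Tl (sigma ! i) b] \<in> prefs (SposHat sigma Sp Sn ce)"
      and run_u: "run delta q0 u = Some q"
      using from_pos q tr by blast
    then obtain v where u: "u = Enc ce v" and vs: "v @ [sigma ! i] \<in> prefs ?S" and b: "b = sgnn (ce v)"
      using Tl_prefix_of_SposHat[where ce = ce, OF ce0] by blast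
    define act where "act = Act sigma ?S ce v"
    define d where "d = int (ce (v @ [sigma ! i])) - int (ce v)"
    have v: "v \<in> prefs ?S" using take_mem_prefs[OF vs, of "length v"] by simp
    then have "accepts delta q0 F (Enc ce v @ [ActL act])"
      using pos unfolding SposHat_def act_def by blast
    then obtain qf where "run delta q0 (Enc ce v @ [ActL act]) = Some qf"
      unfolding accepts_def by blast
    then have qf: "delta q (ActL act) = Some qf"
      using run_u u by (simp add: run_append split: option.splits)
    have "act \<in> SigmaAct sigma ?S ce" using v by (simp add: SigmaAct_def act_def)
    moreover have "qf \<in> Q" using deltaQ q qf by blast
    moreover have "fst act = b" using b by (simp add: act_def Act_def)
    moreover have "restr act i = Some d" using restr_Act[OF i vs] by (simp add: act_def d_def)
    moreover have "d \<in> {-1, 0, 1}" using ce_step vs by (simp add: d_def)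
    moreover have "b = 0 \<Longrightarrow> d \<ge> 0" using b by (simp add: d_def sgnn_def split: if_splits)
    ultimately show ?thesis using qf by auto
  qed
  show ?thesis
    using key[where b = 0] key[where b = 1] by auto
qed

end
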